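(* Let $B$ be a composition of $n$ finite Blaschke products each of degree $2$. Then $B$ has at most $n$ distinct critical values.
   Context: A finite Blaschke product of degree $d$ is $B(z)=\gamma\prod_{j=1}^d \frac{z-a_j}{1-\overline{a_j}z}$ with $a_j\in\mathbb{D}$ and $|\gamma|=1$. The set of critical values of $B$ is $\{w\in\mathbb{D}: w=B(z)\text{ for some } z\in\mathbb{D} \text{ with } B'(z)=0\}$. *)

theory Defs
  imports "HOL-Analysis.Analysis"
begin

definition finite_blaschke :: "nat \<Rightarrow> (complex \<Rightarrow> complex) \<Rightarrow> bool" where
  "finite_blaschke d B \<longleftrightarrow>
     (\<exists>(\<gamma>::complex) (a::nat \<Rightarrow> complex).
        cmod \<gamma> = 1 \<and> (\<forall>j<d. a j \<in> ball 0 1) \<and>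
        (\<forall>z\<in>ball 0 1. B z = \<gamma> * (\<Prod>j<d. (z - a j) / (1 - cnj (a j) * z))))"

definition critical_values :: "(complex \<Rightarrow> complex) \<Rightarrow> complex set" where
  "critical_values B = {w \<in> ball 0 1. \<exists>z\<in>ball 0 1. deriv B z = 0 \<and> w = B z}"

end

theory Submission
  imports Defs "HOL-Complex_Analysis.Riemann_Mapping"
begin

text \<open>By the chain rule, a critical value of a composition \<open>f \<circ> g\<close> of holomorphic self-maps
  of the disk is either the image under \<open>f\<close> of a critical value of \<open>g\<close> or a value of \<open>f\<close> at one
  of its own critical points. So a composition has at most as many critical values as its
  factors have critical points in total, and it suffices that a Blaschke product of degree 2
  has at most one critical point in the disk. Its derivative is, up to a nonvanishing factor,
  the self-inversive quadratic \<open>\<alpha> + \<beta> z + \<alpha>\<^sup>* z\<^sup>2\<close> with \<open>\<beta> \<noteq> 0\<close>; if both roots lay in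
  the disk, their product \<open>\<alpha> / \<alpha>\<^sup>*\<close> would have modulus 1.\<close>

definition critical_points :: "(complex \<Rightarrow> complex) \<Rightarrow> complex set" where
  "critical_points f = {z \<in> ball 0 1. deriv f z = 0}"

text \<open>Rewriting with this instead of \<open>foldr.simps\<close> keeps the composition from being
  unfolded into a \<open>\<lambda>\<close>-term.\<close>
lemma foldr_comp_Cons: "foldr (\<circ>) (f # fs) id = f \<circ> foldr (\<circ>) fs id"
  by simp

lemma critical_values_comp_subset:
  assumes f: "f holomorphic_on ball 0 1"
    and g: "g holomorphic_on ball 0 1" "g ` ball 0 1 \<subseteq> ball 0 1"
  shows "critical_values (f \<circ> g) \<subseteq> f ` critical_values g \<union> f ` critical_points f"
proof
  fix w assume "w \<in> critical_values (f \<circ> g)"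
  then obtain z where z: "z \<in> ball 0 1" "deriv (f \<circ> g) z = 0" and w: "w = f (g z)"
    unfolding critical_values_def by auto
  have gz: "g z \<in> ball 0 1" using g(2) z(1) by blast
  have "deriv (f \<circ> g) z = deriv f (g z) * deriv g z"
    using f g(1) z(1) gz by (intro deriv_chain holomorphic_on_imp_differentiable_at) auto
  with z(2) consider "deriv f (g z) = 0" | "deriv g z = 0" by auto
  then show "w \<in> f ` critical_values g \<union> f ` critical_points f"
  proof cases
    case 1
    then have "g z \<in> critical_points f" using gz unfolding critical_points_def by simp
    then show ?thesis using w by blast
  next
    case 2
    then have "g z \<in> critical_values g" using z(1) gz unfolding critical_values_def by blast
    then show ?thesis using w by blast
  qed
qed

lemma foldr_comp_self_map:
  assumes "\<forall>f\<in>set fs. f holomorphic_on ball 0 1 \<and> f ` ball 0 1 \<subseteq> ball 0 1"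
  shows "foldr (\<circ>) fs id holomorphic_on ball 0 1 \<and> foldr (\<circ>) fs id ` ball 0 1 \<subseteq> ball 0 1"
  using assms
proof (induction fs)
  case Nil
  then show ?case by (simp add: id_def)
next
  case (Cons f fs)
  have "f holomorphic_on ball 0 1" "f ` ball 0 1 \<subseteq> ball 0 1"
    and "\<forall>f\<in>set fs. f holomorphic_on ball 0 1 \<and> f ` ball 0 1 \<subseteq> ball 0 1"
    using Cons.prems by simp_all
  moreover from this(3) have "foldr (\<circ>) fs id holomorphic_on ball 0 1"
    "foldr (\<circ>) fs id ` ball 0 1 \<subseteq> ball 0 1"
    using Cons.IH by blast+
  ultimately show ?case
    unfolding foldr_comp_Cons image_comp[symmetric] by (blast intro: holomorphic_on_compose_gen)
qed

lemma card_critical_values_foldr_comp: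
  assumes "\<forall>f\<in>set fs. f holomorphic_on ball 0 1 \<and> f ` ball 0 1 \<subseteq> ball 0 1
                      \<and> finite (critical_points f)"
  shows "finite (critical_values (foldr (\<circ>) fs id))
         \<and> card (critical_values (foldr (\<circ>) fs id)) \<le> (\<Sum>f\<leftarrow>fs. card (critical_points f))"
  using assms
proof (induction fs)
  case Nil
  then show ?case by (simp add: critical_values_def)
next
  case (Cons f fs)
  let ?g = "foldr (\<circ>) fs id"
  have f: "f holomorphic_on ball 0 1" "finite (critical_points f)"
    and fs: "\<forall>f\<in>set fs. f holomorphic_on ball 0 1 \<and> f ` ball 0 1 \<subseteq> ball 0 1
                           \<and> finite (critical_points f)"
    using Cons.prems by simp_all
  have g: "?g holomorphic_on ball 0 1" "?g ` ball 0 1 \<subseteq> ball 0 1"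
    using foldr_comp_self_map fs by blast+
  have IH: "finite (critical_values ?g)"
    "card (critical_values ?g) \<le> (\<Sum>f\<leftarrow>fs. card (critical_points f))"
    using Cons.IH fs by blast+
  let ?S = "f ` critical_values ?g \<union> f ` critical_points f"
  have sub: "critical_values (f \<circ> ?g) \<subseteq> ?S"
    using critical_values_comp_subset[OF f(1) g] .
  have fin: "finite ?S" using IH(1) f(2) by blast
  have "card (critical_values (f \<circ> ?g)) \<le> card ?S"
    by (rule card_mono[OF fin sub])
  also have "\<dots> \<le> card (critical_values ?g) + card (critical_points f)"
    by (meson add_mono card_Un_le card_image_le f(2) IH(1) order_trans)
  also have "\<dots> \<le> (\<Sum>f\<leftarrow>f # fs. card (critical_points f))"
    using IH(2) by simp
  finally show ?case
    unfolding foldr_comp_Cons using finite_subset[OF sub fin] by blast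
qed

definition blaschke_factor :: "complex \<Rightarrow> complex \<Rightarrow> complex" where
  "blaschke_factor a z = (z - a) / (1 - cnj a * z)"

lemma blaschke_factor_denom_nonzero:
  assumes "norm a < 1" "norm z < 1"
  shows "1 - cnj a * z \<noteq> 0"
proof -
  have "norm (cnj a * z) < 1"
    using mult_strict_mono'[OF assms] by (simp add: norm_mult)
  then show ?thesis by auto
qed

lemma norm_blaschke_factor_less_1:
  "norm a < 1 \<Longrightarrow> norm z < 1 \<Longrightarrow> norm (blaschke_factor a z) < 1"
  using Moebius_function_norm_lt_1[of a z 0]
  by (simp add: Moebius_function_simple blaschke_factor_def)

lemma has_field_derivative_blaschke_factor:
  assumes "1 - cnj a * c \<noteq> 0"
  shows "(blaschke_factor a has_field_derivative (1 - a * cnj a) / (1 - cnj a * c)^2) (at c)"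
proof -
  have "((\<lambda>z. (z - a) / (1 - cnj a * z)) has_field_derivative
          ((1 - 0) * (1 - cnj a * c) - (c - a) * (0 - cnj a * 1)) / ((1 - cnj a * c) * (1 - cnj a * c)))
        (at c)"
    by (intro derivative_intros assms DERIV_cmult[OF DERIV_ident])
  moreover have "((1 - 0) * (1 - cnj a * c) - (c - a) * (0 - cnj a * 1)) / ((1 - cnj a * c) * (1 - cnj a * c))
      = (1 - a * cnj a) / (1 - cnj a * c)^2"
    by (simp add: power2_eq_square algebra_simps)
  ultimately show ?thesis
    unfolding blaschke_factor_def[abs_def] by simp
qed

lemma holomorphic_blaschke_factor:
  assumes "norm a < 1"
  shows "blaschke_factor a holomorphic_on ball 0 1"
  unfolding holomorphic_on_open[OF open_ball]
proof
  fix z :: complex assume "z \<in> ball 0 1"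
  then have "1 - cnj a * z \<noteq> 0" using blaschke_factor_denom_nonzero assms by simp
  then show "\<exists>f'. (blaschke_factor a has_field_derivative f') (at z)"
    using has_field_derivative_blaschke_factor by blast
qed

lemma finite_blaschke_iff:
  "finite_blaschke d B \<longleftrightarrow>
     (\<exists>\<gamma> a. cmod \<gamma> = 1 \<and> (\<forall>j<d. norm (a j) < 1) \<and>
        (\<forall>z\<in>ball 0 1. B z = \<gamma> * (\<Prod>j<d. blaschke_factor (a j) z)))"
  by (simp add: finite_blaschke_def blaschke_factor_def)

lemma finite_blaschke_holomorphic:
  assumes "finite_blaschke d B"
  shows "B holomorphic_on ball 0 1"
proof -
  obtain \<gamma> a where a: "\<forall>j<d. norm (a j) < 1"
    and B: "\<forall>z\<in>ball 0 1. B z = \<gamma> * (\<Prod>j<d. blaschke_factor (a j) z)"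
    using assms unfolding finite_blaschke_iff by blast
  have "(\<lambda>z. \<gamma> * (\<Prod>j<d. blaschke_factor (a j) z)) holomorphic_on ball 0 1"
    using a by (intro holomorphic_on_mult holomorphic_on_const holomorphic_on_prod
        holomorphic_blaschke_factor) simp
  then show ?thesis
    by (rule holomorphic_transform) (simp add: B)
qed

lemma finite_blaschke_maps_ball:
  assumes "finite_blaschke d B" "d > 0"
  shows "B ` ball 0 1 \<subseteq> ball 0 1"
proof
  fix w assume "w \<in> B ` ball 0 1"
  then obtain z where z: "norm z < 1" and w: "w = B z" by auto
  obtain \<gamma> a where "cmod \<gamma> = 1" and a: "\<forall>j<d. norm (a j) < 1"
    and "\<forall>z\<in>ball 0 1. B z = \<gamma> * (\<Prod>j<d. blaschke_factor (a j) z)"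
    using assms(1) unfolding finite_blaschke_iff by blast
  with z w have "norm w = (\<Prod>j<d. norm (blaschke_factor (a j) z))"
    by (simp add: norm_mult prod_norm)
  also have "\<dots> = norm (blaschke_factor (a 0) z) * (\<Prod>j\<in>{..<d} - {0}. norm (blaschke_factor (a j) z))"
    using assms(2) by (simp add: prod.remove)
  also have "\<dots> \<le> norm (blaschke_factor (a 0) z)"
    using a z norm_blaschke_factor_less_1
    by (intro mult_left_le prod_le_1) (auto intro: less_imp_le)
  also have "\<dots> < 1"
    using a z assms(2) norm_blaschke_factor_less_1 by blast
  finally show "w \<in> ball 0 1" by simp
qed

lemma has_field_derivative_blaschke_factor_mult:
  fixes a0 a1 c :: complex
  defines "\<alpha> \<equiv> a0 * a1 * cnj (a0 + a1) - (a0 + a1)"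
    and "\<beta> \<equiv> 2 * (1 - a0 * a1 * cnj (a0 * a1))"
  assumes "1 - cnj a0 * c \<noteq> 0" "1 - cnj a1 * c \<noteq> 0"
  shows "((\<lambda>z. blaschke_factor a0 z * blaschke_factor a1 z) has_field_derivative
           (\<alpha> + \<beta> * c + cnj \<alpha> * c^2) / ((1 - cnj a0 * c) * (1 - cnj a1 * c))^2) (at c)"
proof -
  define u v where "u = 1 - cnj a0 * c" and "v = 1 - cnj a1 * c"
  have u: "u \<noteq> 0" and v: "v \<noteq> 0"
    using assms(3,4) by (simp_all add: u_def v_def)
  have bf: "blaschke_factor a0 c = (c - a0) / u" "blaschke_factor a1 c = (c - a1) / v"
    by (simp_all add: blaschke_factor_def u_def v_def)
  have "((\<lambda>z. blaschke_factor a0 z * blaschke_factor a1 z) has_field_derivative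
          blaschke_factor a0 c * ((1 - a1 * cnj a1) / v^2)
          + (1 - a0 * cnj a0) / u^2 * blaschke_factor a1 c) (at c)"
    unfolding u_def v_def by (intro DERIV_mult' has_field_derivative_blaschke_factor assms(3,4))
  also have "blaschke_factor a0 c * ((1 - a1 * cnj a1) / v^2) + (1 - a0 * cnj a0) / u^2 * blaschke_factor a1 c
      = ((1 - a0 * cnj a0) * (c - a1) * v + (1 - a1 * cnj a1) * (c - a0) * u) / (u * v)^2"
    unfolding bf using u v by (simp add: field_simps power2_eq_square)
  also have "(1 - a0 * cnj a0) * (c - a1) * v + (1 - a1 * cnj a1) * (c - a0) * u
      = \<alpha> + \<beta> * c + cnj \<alpha> * c^2"
    unfolding u_def v_def \<alpha>_def \<beta>_def by (simp add: algebra_simps power2_eq_square)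
  finally show ?thesis unfolding u_def v_def .
qed

lemma self_inversive_quadratic_root_unique:
  fixes \<alpha> \<beta> c1 c2 :: complex
  assumes "\<beta> \<noteq> 0" "norm c1 < 1" "norm c2 < 1"
    and root1: "\<alpha> + \<beta> * c1 + cnj \<alpha> * c1^2 = 0"
    and root2: "\<alpha> + \<beta> * c2 + cnj \<alpha> * c2^2 = 0"
  shows "c1 = c2"
proof (rule ccontr)
  assume "c1 \<noteq> c2"
  have "(c1 - c2) * (\<beta> + cnj \<alpha> * (c1 + c2))
      = (\<alpha> + \<beta> * c1 + cnj \<alpha> * c1^2) - (\<alpha> + \<beta> * c2 + cnj \<alpha> * c2^2)"
    by (simp add: algebra_simps power2_eq_square)
  also have "\<dots> = 0"
    unfolding root1 root2 by simp
  finally have "\<beta> + cnj \<alpha> * (c1 + c2) = 0"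
    using \<open>c1 \<noteq> c2\<close> by simp
  then have \<beta>: "\<beta> = - cnj \<alpha> * (c1 + c2)"
    by (simp add: add_eq_0_iff)
  with \<open>\<beta> \<noteq> 0\<close> have "\<alpha> \<noteq> 0" by auto
  have "\<alpha> = cnj \<alpha> * c1 * c2"
    using root1 unfolding \<beta> by (simp add: algebra_simps power2_eq_square)
  then have "norm \<alpha> = norm \<alpha> * (norm c1 * norm c2)"
    by (metis complex_mod_cnj mult.assoc norm_mult)
  moreover have "norm c1 * norm c2 < 1"
    using mult_strict_mono'[of "norm c1" 1 "norm c2" 1] assms(2,3) by simp
  ultimately show False
    using \<open>\<alpha> \<noteq> 0\<close> by simp
qed

lemma finite_blaschke_2E:
  assumes "finite_blaschke 2 B"
  obtains \<gamma> a0 a1 where "cmod \<gamma> = 1" "norm a0 < 1" "norm a1 < 1"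
    "\<And>z. z \<in> ball 0 1 \<Longrightarrow> B z = \<gamma> * (blaschke_factor a0 z * blaschke_factor a1 z)"
proof -
  obtain \<gamma> and a :: "nat \<Rightarrow> complex" where "cmod \<gamma> = 1" "\<forall>j<2. norm (a j) < 1"
    "\<forall>z\<in>ball 0 1. B z = \<gamma> * (\<Prod>j<2. blaschke_factor (a j) z)"
    using assms unfolding finite_blaschke_iff by blast
  then show thesis
    using that[of \<gamma> "a 0" "a 1"] by (simp add: numeral_2_eq_2)
qed

lemma critical_points_finite_blaschke_2_subset_singleton:
  assumes "finite_blaschke 2 B"
  obtains c where "critical_points B \<subseteq> {c}"
proof -
  obtain \<gamma> a0 a1 where \<gamma>: "cmod \<gamma> = 1" and a: "norm a0 < 1" "norm a1 < 1"
    and B: "\<And>z. z \<in> ball 0 1 \<Longrightarrow> B z = \<gamma> * (blaschke_factor a0 z * blaschke_factor a1 z)"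
    using finite_blaschke_2E[OF assms] by blast
  define \<alpha> where "\<alpha> = a0 * a1 * cnj (a0 + a1) - (a0 + a1)"
  define \<beta> where "\<beta> = 2 * (1 - a0 * a1 * cnj (a0 * a1))"
  have root: "\<alpha> + \<beta> * c + cnj \<alpha> * c^2 = 0" if c: "c \<in> critical_points B" for c :: complex
  proof -
    have cn: "c \<in> ball 0 1" and dB: "deriv B c = 0"
      using c unfolding critical_points_def by auto
    have u: "1 - cnj a0 * c \<noteq> 0" and v: "1 - cnj a1 * c \<noteq> 0"
      using blaschke_factor_denom_nonzero a cn by auto
    have "((\<lambda>z. \<gamma> * (blaschke_factor a0 z * blaschke_factor a1 z)) has_field_derivative
            \<gamma> * ((\<alpha> + \<beta> * c + cnj \<alpha> * c^2) / ((1 - cnj a0 * c) * (1 - cnj a1 * c))^2)) (at c)"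
      (is "(_ has_field_derivative \<gamma> * (?N / ?Q)) _")
      unfolding \<alpha>_def \<beta>_def by (intro DERIV_cmult has_field_derivative_blaschke_factor_mult u v)
    then have "(B has_field_derivative \<gamma> * (?N / ?Q)) (at c)"
      by (rule has_field_derivative_transform_within_open[OF _ open_ball cn]) (simp add: B)
    with dB have "\<gamma> * (?N / ?Q) = 0"
      using DERIV_imp_deriv by metis
    moreover have "\<gamma> \<noteq> 0" "?Q \<noteq> 0"
      using \<gamma> u v by auto
    ultimately show ?thesis by simp
  qed
  have "norm (a0 * a1) < 1"
    using mult_strict_mono'[OF a] by (simp add: norm_mult)
  then have "norm (a0 * a1) ^ 2 \<noteq> 1"
    using power_strict_mono[of "norm (a0 * a1)" 1 2] by simp
  then have "a0 * a1 * cnj (a0 * a1) \<noteq> 1"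
    unfolding complex_norm_square[symmetric] of_real_eq_1_iff .
  then have "\<beta> \<noteq> 0" unfolding \<beta>_def by simp
  then have "c1 = c2" if "c1 \<in> critical_points B" "c2 \<in> critical_points B" for c1 c2
    using self_inversive_quadratic_root_unique[OF \<open>\<beta> \<noteq> 0\<close> _ _ root[OF that(1)] root[OF that(2)]] that
    unfolding critical_points_def by simp
  then show thesis using that by blast
qed

lemma card_critical_points_finite_blaschke_2:
  assumes "finite_blaschke 2 B"
  shows "finite (critical_points B)" "card (critical_points B) \<le> 1"
proof -
  obtain c where c: "critical_points B \<subseteq> {c}"
    using critical_points_finite_blaschke_2_subset_singleton[OF assms] by blast
  show "finite (critical_points B)"
    using finite_subset[OF c] by simp
  show "card (critical_points B) \<le> 1"
    using card_mono[OF _ c] by simp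
qed

theorem corollary4p4:
  fixes fs :: "(complex \<Rightarrow> complex) list" and n :: nat
  assumes "length fs = n"
    and "\<forall>f\<in>set fs. finite_blaschke 2 f"
  shows "finite (critical_values (foldr (\<circ>) fs id))
         \<and> card (critical_values (foldr (\<circ>) fs id)) \<le> n"
proof -
  have blaschke: "finite_blaschke 2 f" if "f \<in> set fs" for f
    using assms(2) that by blast
  have "\<forall>f\<in>set fs. f holomorphic_on ball 0 1 \<and> f ` ball 0 1 \<subseteq> ball 0 1
                    \<and> finite (critical_points f)"
    using finite_blaschke_holomorphic[OF blaschke] finite_blaschke_maps_ball[OF blaschke pos2]
      card_critical_points_finite_blaschke_2(1)[OF blaschke] by blast
  then have bound: "finite (critical_values (foldr (\<circ>) fs id))
      \<and> card (critical_values (foldr (\<circ>) fs id)) \<le> (\<Sum>f\<leftarrow>fs. card (critical_points f))"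
    by (rule card_critical_values_foldr_comp)
  have "(\<Sum>f\<leftarrow>fs. card (critical_points f)) \<le> (\<Sum>f\<leftarrow>fs. 1)"
    using card_critical_points_finite_blaschke_2(2)[OF blaschke] by (intro sum_list_mono)
  also have "(\<Sum>f\<leftarrow>fs. 1) = n"
    using assms(1) by (simp add: sum_list_triv)
  finally show ?thesis
    using bound by (meson order_trans)
qed

end
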